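(* Let $p\ge 2$. Let $\Phi_{\mu_0}$ be the list of functions consisting of $\phi_A$; the edge functions $\phi_{\mathcal{B},m}$ for $1\le m\le p-2$; the edge functions $\phi_{\mathcal{C},m}$ for $1\le m\le p-2$; and the interior functions $\phi_{\mathcal{I},m,n}$ for $m,n\ge 0$, $m+n\le p-4$. Let $\Phi_*$ be the list consisting of the edge functions $\phi_{\mathcal{A},m}$ for $1\le m\le p-1$ and the interior functions $\phi_{\mathcal{I},m,n}$ for $m,n\ge0$, $m+n\le p-3$. Then both lists have exactly $\tfrac12 p(p-1)$ elements, and the square matrix $G$ with entries $G_{ij}=\int_{\Omega_{ref}} \chi_i\,\eta_j\,d\Omega$, where $\chi_i$ runs over $\Phi_{\mu_0}$ and $\eta_j$ runs over $\Phi_*$, is non-singular. Consequently the only vector $x\in\mathbb{R}^{p(p-1)/2}$ with $Gx=0$ is $x=0$.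
   Context: $\Omega_{ref}=\{(r,s): -1\le r,\ -1\le s,\ r+s\le 0\}$. Warped coordinates: $\xi=-1+2\frac{1+r}{1-s}$, $\eta=s$. $P_n^{\alpha,\beta}$ denotes the classical Jacobi polynomial of degree $n$, orthogonal on $(-1,1)$ with weight $(1-z)^\alpha(1+z)^\beta$. The modified Dubiner functions are: vertex functions $\phi_A=\frac{1+\eta}{2}$, $\phi_B=\frac{1-\xi}{2}\frac{1-\eta}{2}$, $\phi_C=\frac{1+\xi}{2}\frac{1-\eta}{2}$; edge functions, for $1\le m\le p-1$, $\phi_{\mathcal{A},m}=\frac{1+\xi}{2}\frac{1-\xi}{2}P^{2,2}_{m-1}(\xi)\left(\frac{1-\eta}{2}\right)^{m+1}$, $\phi_{\mathcal{B},m}=\frac{1+\xi}{2}\frac{1-\eta}{2}\frac{1+\eta}{2}P^{2,2}_{m-1}(\eta)$, $\phi_{\mathcal{C},m}=(-1)^{m-1}\frac{1-\xi}{2}\frac{1-\eta}{2}\frac{1+\eta}{2}P^{2,2}_{m-1}(\eta)$; interior functions, for $m,n\ge 0$, $m+n\le p-3$, $\phi_{\mathcal{I},m,n}=\frac{1-\xi}{2}\frac{1+\xi}{2}P^{2,2}_m(\xi)\left(\frac{1-\eta}{2}\right)^{m+2}\frac{1+\eta}{2}P^{2m+5,2}_n(\eta)$. All of these are polynomials in $(r,s)$. *)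

theory Defs
  imports "HOL-Analysis.Analysis" "Jordan_Normal_Form.Determinant"
begin

definition jacobiP :: "nat \<Rightarrow> nat \<Rightarrow> nat \<Rightarrow> real \<Rightarrow> real" where
  "jacobiP n a b z = (\<Sum>k\<le>n. real ((n + a) choose (n - k)) * real ((n + b) choose k)
       * ((z - 1) / 2) ^ k * ((z + 1) / 2) ^ (n - k))"

definition Omega_ref :: "(real \<times> real) set" where
  "Omega_ref = {(r, s). -1 \<le> r \<and> -1 \<le> s \<and> r + s \<le> 0}"

definition xi :: "real \<Rightarrow> real \<Rightarrow> real" where
  "xi r s = -1 + 2 * (1 + r) / (1 - s)"

definition eta :: "real \<Rightarrow> real \<Rightarrow> real" where
  "eta r s = s"

definition phiA :: "real \<Rightarrow> real \<Rightarrow> real" where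
  "phiA r s = (1 + eta r s) / 2"

definition phiB :: "real \<Rightarrow> real \<Rightarrow> real" where
  "phiB r s = (1 - xi r s) / 2 * ((1 - eta r s) / 2)"

definition phiC :: "real \<Rightarrow> real \<Rightarrow> real" where
  "phiC r s = (1 + xi r s) / 2 * ((1 - eta r s) / 2)"

definition phiEA :: "nat \<Rightarrow> real \<Rightarrow> real \<Rightarrow> real" where
  "phiEA m r s = (1 + xi r s) / 2 * ((1 - xi r s) / 2) * jacobiP (m - 1) 2 2 (xi r s)
      * ((1 - eta r s) / 2) ^ (m + 1)"

definition phiEB :: "nat \<Rightarrow> real \<Rightarrow> real \<Rightarrow> real" where
  "phiEB m r s = (1 + xi r s) / 2 * ((1 - eta r s) / 2) * ((1 + eta r s) / 2)
      * jacobiP (m - 1) 2 2 (eta r s)"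

definition phiEC :: "nat \<Rightarrow> real \<Rightarrow> real \<Rightarrow> real" where
  "phiEC m r s = (-1) ^ (m - 1) * ((1 - xi r s) / 2) * ((1 - eta r s) / 2) * ((1 + eta r s) / 2)
      * jacobiP (m - 1) 2 2 (eta r s)"

definition phiI :: "nat \<Rightarrow> nat \<Rightarrow> real \<Rightarrow> real \<Rightarrow> real" where
  "phiI m n r s = (1 - xi r s) / 2 * ((1 + xi r s) / 2) * jacobiP m 2 2 (xi r s)
      * ((1 - eta r s) / 2) ^ (m + 2) * ((1 + eta r s) / 2) * jacobiP n (2 * m + 5) 2 (eta r s)"

definition Phi_mu0 :: "nat \<Rightarrow> (real \<Rightarrow> real \<Rightarrow> real) list" where
  "Phi_mu0 p = [phiA]
     @ [phiEB m. m \<leftarrow> [1..<p - 1]]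
     @ [phiEC m. m \<leftarrow> [1..<p - 1]]
     @ [phiI m n. m \<leftarrow> [0..<p + 1], n \<leftarrow> [0..<p + 1], m + n + 4 \<le> p]"

definition Phi_star :: "nat \<Rightarrow> (real \<Rightarrow> real \<Rightarrow> real) list" where
  "Phi_star p = [phiEA m. m \<leftarrow> [1..<p]]
     @ [phiI m n. m \<leftarrow> [0..<p + 1], n \<leftarrow> [0..<p + 1], m + n + 3 \<le> p]"

definition gram :: "nat \<Rightarrow> real mat" where
  "gram p = Matrix.mat (length (Phi_mu0 p)) (length (Phi_star p))
     (\<lambda>(i, j). integral Omega_ref (\<lambda>(r, s). (Phi_mu0 p ! i) r s * (Phi_star p ! j) r s))"

end

(* In the collapsed coordinates (xi, eta) the functions of Phi_mu0 are (1 + eta) * chi and those of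
   Phi_star are psi, with chi and psi polynomials.  Multiplying any chi by the bubble
   b = (1 + xi)(1 - xi)(1 - eta)^2 / 16 lands in the span of the psi's, since the Jacobi families of
   the edge and interior functions exhaust the polynomials of the relevant degrees; write
   b * chi_k = sum_j D_kj psi_j.  Then G * D^T is the matrix of the bilinear form
   integral ((1 + eta) b chi_i chi_k), whose quadratic form integral ((1 + eta) b (sum_k v_k chi_k)^2)
   has a non-negative integrand.  If it vanishes, sum_k v_k chi_k vanishes on an open set, hence
   everywhere, and the chi's are linearly independent (their traces on xi = -1 and xi = 1 and the
   degrees of the Jacobi polynomials separate them), so v = 0.  Hence G * D^T, and with it G, is
   non-singular. *)

theory Submission
  imports Defs "HOL-Computational_Algebra.Polynomial"
begin

unbundle no vec_syntax

definition jacobi_poly :: "nat \<Rightarrow> nat \<Rightarrow> nat \<Rightarrow> real poly" where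
  "jacobi_poly n a b = (\<Sum>k\<le>n. Polynomial.smult (real ((n + a) choose (n - k)) * real ((n + b) choose k))
       ([:-1/2, 1/2:] ^ k * [:1/2, 1/2:] ^ (n - k)))"

lemma poly_jacobi_poly [simp]: "poly (jacobi_poly n a b) = jacobiP n a b"
  by (rule ext) (simp add: jacobi_poly_def jacobiP_def poly_sum algebra_simps diff_divide_distrib
      add_divide_distrib)

lemma
  shows degree_jacobi_poly [simp]: "degree (jacobi_poly n a b) = n"
    and jacobi_poly_nonzero [simp]: "jacobi_poly n a b \<noteq> 0"
proof -
  define X where "X k = ([:-1/2, 1/2:] ^ k * [:1/2, 1/2:] ^ (n - k) :: real poly)" for k
  define w where "w k = real ((n + a) choose (n - k)) * real ((n + b) choose k)" for k
  have deg_X: "degree (X k) = n" if "k \<le> n" for k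
    using that by (simp add: X_def degree_mult_eq degree_power_eq)
  have coeff_X: "coeff (X k) n = (1/2) ^ n" if "k \<le> n" for k
  proof -
    have "coeff (X k) n = lead_coeff (X k)" using deg_X[OF that] by simp
    also have "\<dots> = (1/2) ^ k * (1/2) ^ (n - k)" by (simp add: X_def lead_coeff_mult lead_coeff_power)
    finally show ?thesis using that by (simp add: power_add[symmetric])
  qed
  have jp: "jacobi_poly n a b = (\<Sum>k\<le>n. Polynomial.smult (w k) (X k))"
    by (simp add: jacobi_poly_def X_def w_def)
  have "degree (jacobi_poly n a b) \<le> n"
    unfolding jp by (intro degree_sum_le) (auto intro: order.trans[OF degree_smult_le] simp: deg_X)
  moreover have "coeff (jacobi_poly n a b) n = (\<Sum>k\<le>n. w k) * (1/2) ^ n"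
    by (simp add: jp coeff_sum coeff_X sum_distrib_right)
  moreover have "w 0 \<le> (\<Sum>k\<le>n. w k)"
    by (rule member_le_sum) (auto simp: w_def)
  moreover have "0 < w 0"
    by (simp add: w_def)
  ultimately have "degree (jacobi_poly n a b) \<le> n" "coeff (jacobi_poly n a b) n \<noteq> 0"
    by auto
  then show "degree (jacobi_poly n a b) = n" "jacobi_poly n a b \<noteq> 0"
    by (auto simp: le_antisym le_degree)
qed

lemma graded_family_independent:
  fixes P :: "nat \<Rightarrow> 'a::field poly"
  assumes deg: "\<And>k. degree (P k) = k" and nonzero: "\<And>k. P k \<noteq> 0"
    and sum0: "(\<Sum>k<K. Polynomial.smult (c k) (P k)) = 0" and "k < K"
  shows "c k = 0"
  using sum0 \<open>k < K\<close>
proof (induction K)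
  case (Suc K)
  have "coeff (\<Sum>k<K. Polynomial.smult (c k) (P k)) K = 0"
  proof (cases K)
    case (Suc K')
    then have "degree (\<Sum>k<K. Polynomial.smult (c k) (P k)) \<le> K'"
      by (intro degree_sum_le) (auto intro: order.trans[OF degree_smult_le] simp: deg)
    then show ?thesis using Suc by (intro coeff_eq_0) (simp del: sum.lessThan_Suc)
  qed simp
  then have "c K * lead_coeff (P K) = 0"
    using arg_cong[OF Suc.prems(1), of "\<lambda>q. coeff q K"] by (simp add: deg)
  then have cK: "c K = 0" using nonzero by simp
  then show ?case
    using Suc by (cases "k = K") auto
qed simp

lemma graded_family_spans:
  fixes P :: "nat \<Rightarrow> 'a::field poly"
  assumes deg: "\<And>k. degree (P k) = k" and nonzero: "\<And>k. P k \<noteq> 0"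
  shows "degree q < K \<Longrightarrow> \<exists>c. q = (\<Sum>k<K. Polynomial.smult (c k) (P k))"
proof (induction K arbitrary: q)
  case 0
  then show ?case by simp
next
  case (Suc K)
  define t where "t = coeff q K / lead_coeff (P K)"
  have "coeff (P K) K \<noteq> 0"
    using nonzero deg by (metis leading_coeff_0_iff)
  then have high: "coeff (q - Polynomial.smult t (P K)) i = 0" if "i \<ge> K" for i
    using that Suc.prems deg[of K] coeff_eq_0[of q i] coeff_eq_0[of "P K" i]
    by (cases "i = K") (auto simp: t_def)
  have "degree (q - Polynomial.smult t (P K)) < K \<or> q - Polynomial.smult t (P K) = 0"
  proof (cases K)
    case 0
    then show ?thesis using high by (auto intro: poly_eqI)
  next
    case (Suc K')
    then show ?thesis using high by (auto intro!: le_imp_less_Suc degree_le)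
  qed
  then have "\<exists>c. q - Polynomial.smult t (P K) = (\<Sum>k<K. Polynomial.smult (c k) (P k))"
    using Suc.IH by (auto intro: exI[of _ "\<lambda>_. 0"])
  then obtain c where c: "q - Polynomial.smult t (P K) = (\<Sum>k<K. Polynomial.smult (c k) (P k))"
    by blast
  show ?case
    by (rule exI[of _ "c(K := t)"]) (simp add: c[symmetric])
qed

lemma jacobiP_expansion:
  assumes "degree q < K"
  obtains c where "\<And>x. poly q x = (\<Sum>k<K. c k * jacobiP k a b x)"
proof -
  obtain c where "q = (\<Sum>k<K. Polynomial.smult (c k) (jacobi_poly k a b))"
    using graded_family_spans[of "\<lambda>k. jacobi_poly k a b", OF degree_jacobi_poly jacobi_poly_nonzero assms]
    by blast
  then show thesis
    using that[of c] by (simp add: poly_sum)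
qed

lemma jacobiP_independent:
  assumes "finite E" and sum0: "\<And>x. x \<notin> E \<Longrightarrow> (\<Sum>k<K. c k * jacobiP k a b x) = 0" and "k < K"
  shows "c k = 0"
proof -
  define q where "q = (\<Sum>k<K. Polynomial.smult (c k) (jacobi_poly k a b))"
  have "- E \<subseteq> {x. poly q x = 0}"
    using sum0 by (auto simp: q_def poly_sum)
  moreover have "infinite (- E)"
    using \<open>finite E\<close> infinite_UNIV_char_0 by (metis Compl_partition2 finite_UnI)
  ultimately have "q = 0"
    using poly_roots_finite finite_subset by blast
  then show ?thesis
    using graded_family_independent[OF degree_jacobi_poly jacobi_poly_nonzero] \<open>k < K\<close>
    by (simp add: q_def)
qed

lemma real_polynomial_function_eq_0:
  fixes f :: "real \<Rightarrow> real"
  assumes "real_polynomial_function f" and "infinite {x. f x = 0}"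
  shows "f x = 0"
proof -
  obtain a n where f: "f = (\<lambda>x. \<Sum>i\<le>n. a i * x ^ i)"
    using assms(1) real_polynomial_function_iff_sum by auto
  then have "\<forall>k\<le>n. a k = 0"
    using assms(2) polyfun_finite_roots[of a n] by auto
  then show ?thesis
    by (simp add: f)
qed

lemma real_polynomial_function_fst: "real_polynomial_function fst"
  by (rule real_polynomial_function.intros(1)[OF bounded_linear_fst])

lemma real_polynomial_function_snd: "real_polynomial_function snd"
  by (rule real_polynomial_function.intros(1)[OF bounded_linear_snd])

lemma real_polynomial_function_jacobiP:
  assumes "real_polynomial_function f"
  shows "real_polynomial_function (\<lambda>x. jacobiP n a b (f x))"
  unfolding jacobiP_def
  by (intro real_polynomial_function_sum real_polynomial_function.intros(2-4) real_polynomial_function_diff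
      real_polynomial_function_divide real_polynomial_function_power assms finite_atMost)

lemmas real_polynomial_function_intros = real_polynomial_function.intros(2-4)
  real_polynomial_function_diff real_polynomial_function_divide real_polynomial_function_power
  real_polynomial_function_sum real_polynomial_function_jacobiP
  real_polynomial_function_fst real_polynomial_function_snd

definition bivariate_polynomial :: "(real \<Rightarrow> real \<Rightarrow> real) \<Rightarrow> bool" where
  "bivariate_polynomial H \<longleftrightarrow> real_polynomial_function (\<lambda>z. H (fst z) (snd z))"

lemma bivariate_polynomial_partial:
  assumes "bivariate_polynomial H"
  shows "real_polynomial_function (\<lambda>x. H x y)" and "real_polynomial_function (\<lambda>y. H x y)"
proof -
  have H: "real_polynomial_function (\<lambda>z. H (fst z) (snd z))"
    using assms by (simp add: bivariate_polynomial_def)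
  have "polynomial_function (\<lambda>x::real. (x, 0) + (0, y))" "polynomial_function (\<lambda>y::real. (0, y) + (x, 0))"
    by (intro polynomial_function_add polynomial_function_bounded_linear polynomial_function_const
        bounded_linear_Pair bounded_linear_ident bounded_linear_zero)+
  from this[THEN real_polynomial_function_compose, OF H]
  show "real_polynomial_function (\<lambda>x. H x y)" "real_polynomial_function (\<lambda>y. H x y)"
    by (simp_all add: o_def)
qed

lemma bivariate_polynomial_eq_0:
  assumes H: "bivariate_polynomial H" and "a < b" "c < d"
    and box0: "\<And>x y. a < x \<Longrightarrow> x < b \<Longrightarrow> c < y \<Longrightarrow> y < d \<Longrightarrow> H x y = 0"
  shows "H x y = 0"
proof -
  have row: "H x' y' = 0" if "c < y'" "y' < d" for x' y'
  proof (rule real_polynomial_function_eq_0[OF bivariate_polynomial_partial(1)[OF H]])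
    show "infinite {x. H x y' = 0}"
      by (rule infinite_super[OF _ infinite_Ioo[OF \<open>a < b\<close>]]) (use box0 that in auto)
  qed
  show ?thesis
  proof (rule real_polynomial_function_eq_0[OF bivariate_polynomial_partial(2)[OF H]])
    show "infinite {y. H x y = 0}"
      by (rule infinite_super[OF _ infinite_Ioo[OF \<open>c < d\<close>]]) (use row in auto)
  qed
qed

lemma continuous_on_bivariate_polynomial:
  "bivariate_polynomial H \<Longrightarrow> continuous_on S (\<lambda>z. H (fst z) (snd z))"
  unfolding bivariate_polynomial_def real_polynomial_function_eq
  by (rule continuous_on_polymonial_function)

section \<open>The bases in collapsed coordinates\<close>

definition index_pairs :: "nat \<Rightarrow> nat \<Rightarrow> (nat \<times> nat) list" where
  "index_pairs d p = [(m, n). m \<leftarrow> [0..<p + 1], n \<leftarrow> [0..<p + 1], m + n + d \<le> p]"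

lemma map_pair_comprehension:
  "[f m n. m \<leftarrow> xs, n \<leftarrow> ys, P m n] = map (\<lambda>(m, n). f m n) [(m, n). m \<leftarrow> xs, n \<leftarrow> ys, P m n]"
  by (simp add: map_concat comp_def if_distrib cong: map_cong if_cong)

lemma pair_comprehension_eq_filter:
  "[(m, n). m \<leftarrow> xs, n \<leftarrow> ys, P m n] = filter (\<lambda>(m, n). P m n) (List.product xs ys)"
proof -
  have "concat (map (\<lambda>n. if P m n then [(m, n)] else []) ys) = map (Pair m) (filter (P m) ys)" for m
    by (induction ys) auto
  then show ?thesis
    by (simp add: product_concat_map filter_concat filter_map comp_def)
qed

lemma distinct_index_pairs: "distinct (index_pairs d p)"
  unfolding index_pairs_def pair_comprehension_eq_filter by (simp add: distinct_product)

lemma set_index_pairs: "set (index_pairs d p) = {(m, n). m + n + d \<le> p}"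
  unfolding index_pairs_def pair_comprehension_eq_filter by auto

lemma card_pairs_sum_less: "2 * card {(m, n). m + n < (L::nat)} = L * (L + 1)"
proof (induction L)
  case (Suc L)
  have split: "{(m, n). m + n < Suc L} = {(m, n). m + n < L} \<union> (\<lambda>m. (m, L - m)) ` {..L}"
    by auto
  have "finite {(m, n). m + n < (L::nat)}"
    by (rule finite_subset[of _ "{..<L} \<times> {..<L}"]) auto
  moreover have "inj_on (\<lambda>m. (m, L - m)) {..L}"
    by (auto intro: inj_onI)
  ultimately have "card {(m, n). m + n < Suc L} = card {(m, n). m + n < L} + (L + 1)"
    unfolding split by (subst card_Un_disjoint) (auto simp: card_image)
  then show ?case
    using Suc by simp
qed simp

lemma length_index_pairs:
  assumes "d \<ge> 1"
  shows "2 * length (index_pairs d p) = (p + 1 - d) * (p + 2 - d)"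
proof -
  have "length (index_pairs d p) = card (set (index_pairs d p))"
    by (simp add: distinct_card distinct_index_pairs)
  also have "set (index_pairs d p) = {(m, n). m + n < p + 1 - d}"
    using assms by (auto simp: set_index_pairs)
  finally have len: "2 * length (index_pairs d p) = (p + 1 - d) * (p + 1 - d + 1)"
    by (simp only: card_pairs_sum_less)
  show ?thesis
  proof (cases "d \<le> p + 1")
    case True
    then have "p + 1 - d + 1 = p + 2 - d" by arith
    with len show ?thesis by (simp only:)
  qed (use len in simp)
qed

text \<open>The functions of \<open>Phi_star\<close> (\<open>psi\<close>) and those of \<open>Phi_mu0\<close> divided by \<open>1 + eta\<close>
  (\<open>chi\<close>), as functions of the collapsed coordinates \<open>(xi, eta)\<close>.\<close>

definition warp :: "(real \<Rightarrow> real \<Rightarrow> real) \<Rightarrow> real \<Rightarrow> real \<Rightarrow> real" where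
  "warp g r s = g (xi r s) (eta r s)"

definition psiA :: "nat \<Rightarrow> real \<Rightarrow> real \<Rightarrow> real" where
  "psiA m x y = (1 + x) / 2 * ((1 - x) / 2) * jacobiP (m - 1) 2 2 x * ((1 - y) / 2) ^ (m + 1)"

definition psiI :: "nat \<Rightarrow> nat \<Rightarrow> real \<Rightarrow> real \<Rightarrow> real" where
  "psiI m n x y = (1 - x) / 2 * ((1 + x) / 2) * jacobiP m 2 2 x
      * ((1 - y) / 2) ^ (m + 2) * ((1 + y) / 2) * jacobiP n (2 * m + 5) 2 y"

definition psi_list :: "nat \<Rightarrow> (real \<Rightarrow> real \<Rightarrow> real) list" where
  "psi_list p = map psiA [1..<p] @ map (\<lambda>(m, n). psiI m n) (index_pairs 3 p)"

definition chiB :: "nat \<Rightarrow> real \<Rightarrow> real \<Rightarrow> real" where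
  "chiB m x y = (1 + x) / 2 * ((1 - y) / 2) * jacobiP (m - 1) 2 2 y / 2"

definition chiC :: "nat \<Rightarrow> real \<Rightarrow> real \<Rightarrow> real" where
  "chiC m x y = (-1) ^ (m - 1) * ((1 - x) / 2) * ((1 - y) / 2) * jacobiP (m - 1) 2 2 y / 2"

definition chiI :: "nat \<Rightarrow> nat \<Rightarrow> real \<Rightarrow> real \<Rightarrow> real" where
  "chiI m n x y = (1 - x) / 2 * ((1 + x) / 2) * jacobiP m 2 2 x * ((1 - y) / 2) ^ (m + 2)
      * jacobiP n (2 * m + 5) 2 y / 2"

definition chi_list :: "nat \<Rightarrow> (real \<Rightarrow> real \<Rightarrow> real) list" where
  "chi_list p = (\<lambda>x y. 1 / 2) # map chiB [1..<p - 1] @ map chiC [1..<p - 1]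
     @ map (\<lambda>(m, n). chiI m n) (index_pairs 4 p)"

lemma Phi_mu0_eq_warp: "Phi_mu0 p = map (\<lambda>c. warp (\<lambda>x y. (1 + y) * c x y)) (chi_list p)"
proof -
  have "phiA = warp (\<lambda>x y. (1 + y) * (1 / 2))"
    "phiEB m = warp (\<lambda>x y. (1 + y) * chiB m x y)"
    "phiEC m = warp (\<lambda>x y. (1 + y) * chiC m x y)"
    "phiI m n = warp (\<lambda>x y. (1 + y) * chiI m n x y)" for m n
    by (intro ext; simp add: phiA_def phiEB_def phiEC_def phiI_def warp_def chiB_def chiC_def
        chiI_def field_simps)+
  then show ?thesis
    unfolding Phi_mu0_def chi_list_def map_pair_comprehension[where f = phiI] index_pairs_def[symmetric]
    by (simp add: case_prod_beta' cong: map_cong)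
qed

lemma Phi_star_eq_warp: "Phi_star p = map warp (psi_list p)"
proof -
  have "phiEA m = warp (psiA m)" "phiI m n = warp (psiI m n)" for m n
    by (intro ext; simp add: phiEA_def phiI_def warp_def psiA_def psiI_def)+
  then show ?thesis
    unfolding Phi_star_def psi_list_def map_pair_comprehension[where f = phiI] index_pairs_def[symmetric]
    by (simp add: case_prod_beta' cong: map_cong)
qed

lemma length_chi_list:
  assumes "p \<ge> 2"
  shows "length (chi_list p) = p * (p - 1) div 2"
proof -
  have "2 * length (chi_list p) = p * (p - 1)"
  proof (cases "p = 2")
    case False
    then obtain q where "p = q + 3"
      using assms by (metis add.commute le_Suc_ex le_neq_implies_less Suc_leI numeral_3_eq_3 numeral_2_eq_2)
    then show ?thesis
      using length_index_pairs[of 4 p] by (simp add: chi_list_def algebra_simps)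
  qed (simp add: chi_list_def index_pairs_def)
  then show ?thesis by simp
qed

lemma length_psi_list:
  assumes "p \<ge> 2"
  shows "length (psi_list p) = p * (p - 1) div 2"
proof -
  obtain q where "p = q + 2"
    using assms by (metis add.commute le_Suc_ex)
  then have "2 * length (psi_list p) = p * (p - 1)"
    using length_index_pairs[of 3 p] by (simp add: psi_list_def algebra_simps)
  then show ?thesis by simp
qed

lemma bivariate_polynomial_chi_list:
  "c \<in> set (chi_list p) \<Longrightarrow> bivariate_polynomial c"
  by (auto simp: chi_list_def bivariate_polynomial_def chiB_def chiC_def chiI_def;
      intro real_polynomial_function_intros)

lemma bivariate_polynomial_psi_list:
  "g \<in> set (psi_list p) \<Longrightarrow> bivariate_polynomial g"
  by (auto simp: psi_list_def bivariate_polynomial_def psiA_def psiI_def;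
      intro real_polynomial_function_intros)

lemma continuous_on_chi_list:
  "i < length (chi_list p) \<Longrightarrow> continuous_on S (\<lambda>z. (chi_list p ! i) (fst z) (snd z))"
  by (intro continuous_on_bivariate_polynomial bivariate_polynomial_chi_list[of _ p] nth_mem)

lemma continuous_on_psi_list:
  "j < length (psi_list p) \<Longrightarrow> continuous_on S (\<lambda>z. (psi_list p ! j) (fst z) (snd z))"
  by (intro continuous_on_bivariate_polynomial bivariate_polynomial_psi_list[of _ p] nth_mem)

section \<open>The bubble maps the test functions into the trial span\<close>

definition fun_span :: "('a \<Rightarrow> 'b \<Rightarrow> real) list \<Rightarrow> ('a \<Rightarrow> 'b \<Rightarrow> real) set" where
  "fun_span L = {f. \<exists>z. \<forall>x y. f x y = (\<Sum>j<length L. z j * (L ! j) x y)}"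

lemma fun_span_cong: "f \<in> fun_span L \<Longrightarrow> (\<And>x y. g x y = f x y) \<Longrightarrow> g \<in> fun_span L"
  by (auto simp: fun_span_def)

lemma fun_span_base:
  assumes "g \<in> set L"
  shows "g \<in> fun_span L"
proof -
  obtain i where i: "i < length L" "L ! i = g"
    using assms by (auto simp: in_set_conv_nth)
  have "g x y = (\<Sum>j<length L. (if j = i then 1 else 0) * (L ! j) x y)" for x y
    using i by (simp add: if_distrib[of "\<lambda>c. c * _"] cong: if_cong)
  then show ?thesis
    unfolding fun_span_def by (auto intro!: exI[of _ "\<lambda>j. if j = i then 1 else 0"])
qed

lemma fun_span_scale: "f \<in> fun_span L \<Longrightarrow> (\<lambda>x y. c * f x y) \<in> fun_span L"
  unfolding fun_span_def by (force intro: exI[of _ "\<lambda>j. c * _ j"] simp: sum_distrib_left mult.assoc)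

lemma fun_span_add:
  assumes "f \<in> fun_span L" "g \<in> fun_span L"
  shows "(\<lambda>x y. f x y + g x y) \<in> fun_span L"
proof -
  obtain z w where "\<And>x y. f x y = (\<Sum>j<length L. z j * (L ! j) x y)"
    "\<And>x y. g x y = (\<Sum>j<length L. w j * (L ! j) x y)"
    using assms unfolding fun_span_def mem_Collect_eq by blast
  then have "f x y + g x y = (\<Sum>j<length L. (z j + w j) * (L ! j) x y)" for x y
    by (simp add: sum.distrib distrib_right)
  then show ?thesis
    unfolding fun_span_def by (auto intro!: exI[of _ "\<lambda>j. z j + w j"])
qed

lemma fun_span_sum:
  "finite I \<Longrightarrow> (\<And>i. i \<in> I \<Longrightarrow> f i \<in> fun_span L) \<Longrightarrow> (\<lambda>x y. \<Sum>i\<in>I. f i x y) \<in> fun_span L"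
proof (induction I rule: finite_induct)
  case empty
  have "(\<lambda>x y. 0) \<in> fun_span L"
    unfolding fun_span_def by (auto intro: exI[of _ "\<lambda>_. 0"])
  then show ?case by simp
next
  case (insert i I)
  then show ?case by (simp add: fun_span_add)
qed

definition bubble :: "real \<Rightarrow> real \<Rightarrow> real" where
  "bubble x y = (1 + x) / 2 * ((1 - x) / 2) * ((1 - y) / 2) ^ 2"

lemma psiA_times_poly_in_span:
  assumes "k + degree g \<le> p - 2" and "p \<ge> 2"
  shows "(\<lambda>x y. psiA (Suc k) x y * poly g y) \<in> fun_span (psi_list p)"
proof -
  have "Suc k \<in> {1..<p}"
    using assms by auto
  then have psiA_in: "psiA (Suc k) \<in> fun_span (psi_list p)"
    by (intro fun_span_base) (auto simp: psi_list_def)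
  show ?thesis
  proof (cases "degree g = 0")
    case True
    then obtain c where g: "g = [:c:]"
      by (meson degree_eq_zeroE)
    show ?thesis
      by (rule fun_span_cong[OF fun_span_scale[OF psiA_in, of c]]) (simp add: g mult.commute)
  next
    case False
    txt \<open>The value \<open>g(-1)\<close> is carried by the edge function, the quotient \<open>h\<close> by interior ones.\<close>
    define h where "h = synthetic_div g (-1)"
    have g_div: "[:1, 1:] * h + [:poly g (-1):] = g"
      using synthetic_div_correct'[of "-1" g] by (simp add: h_def)
    have g_eq: "poly g y = poly g (-1) + (1 + y) * poly h y" for y
      by (subst (1) g_div[symmetric]) (simp add: algebra_simps)
    have "degree h < p - 2 - k"
      using assms False by (simp add: h_def degree_synthetic_div)
    then obtain \<beta> where \<beta>: "\<And>y. poly h y = (\<Sum>n<p - 2 - k. \<beta> n * jacobiP n (2 * k + 5) 2 y)"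
      by (metis jacobiP_expansion)
    have "psiI k n \<in> fun_span (psi_list p)" if "n < p - 2 - k" for n
      using that by (intro fun_span_base) (auto simp: psi_list_def set_index_pairs)
    then have "(\<lambda>x y. poly g (-1) * psiA (Suc k) x y + (\<Sum>n<p - 2 - k. 2 * \<beta> n * psiI k n x y))
        \<in> fun_span (psi_list p)"
      by (intro fun_span_add fun_span_scale psiA_in fun_span_sum) auto
    then show ?thesis
    proof (rule fun_span_cong)
      fix x y
      let ?A = "psiA (Suc k) x y" and ?P = "\<lambda>n. jacobiP n (2 * k + 5) 2 y"
      have psiI_eq: "psiI k n x y = ?A * ((1 + y) / 2) * ?P n" for n
        by (simp add: psiA_def psiI_def ac_simps)
      have "?A * poly g y = ?A * (poly g (-1) + (1 + y) * (\<Sum>n<p - 2 - k. \<beta> n * ?P n))"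
        by (simp only: g_eq[of y] \<beta>)
      also have "\<dots> = poly g (-1) * ?A + (\<Sum>n<p - 2 - k. 2 * \<beta> n * (?A * ((1 + y) / 2) * ?P n))"
        by (simp add: distrib_left sum_distrib_left mult_ac)
      finally show "?A * poly g y = poly g (-1) * ?A + (\<Sum>n<p - 2 - k. 2 * \<beta> n * psiI k n x y)"
        by (simp only: psiI_eq)
    qed
  qed
qed

lemma bubble_times_poly_in_span:
  assumes "degree f \<le> K" and "K + degree g \<le> p - 2" and "p \<ge> 2"
  shows "(\<lambda>x y. bubble x y * poly f x * ((1 - y) / 2) ^ K * poly g y) \<in> fun_span (psi_list p)"
proof -
  obtain \<gamma> where \<gamma>: "\<And>x. poly f x = (\<Sum>k<Suc K. \<gamma> k * jacobiP k 2 2 x)"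
    using assms(1) by (metis jacobiP_expansion le_imp_less_Suc)
  define G where "G k = g * [:1/2, -1/2:] ^ (K - k)" for k
  have poly_G: "poly (G k) y = poly g y * ((1 - y) / 2) ^ (K - k)" for k y
    by (simp add: G_def diff_divide_distrib)
  have "k + degree (G k) \<le> p - 2" if "k \<le> K" for k
  proof -
    have "degree (G k) \<le> degree g + (K - k)"
      unfolding G_def
      by (rule order.trans[OF degree_mult_le], simp, rule order.trans[OF degree_power_le]) simp
    then show ?thesis using assms(2) that by linarith
  qed
  then have "(\<lambda>x y. \<Sum>k<Suc K. \<gamma> k * (psiA (Suc k) x y * poly (G k) y)) \<in> fun_span (psi_list p)"
    by (intro fun_span_sum fun_span_scale psiA_times_poly_in_span assms(3)) auto
  then show ?thesis
  proof (rule fun_span_cong)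
    fix x y
    have "bubble x y * jacobiP k 2 2 x * ((1 - y) / 2) ^ K * poly g y = psiA (Suc k) x y * poly (G k) y"
      if "k < Suc K" for k
      using that by (simp add: bubble_def psiA_def poly_G power_add[symmetric] algebra_simps flip: power_Suc)
    then show "bubble x y * poly f x * ((1 - y) / 2) ^ K * poly g y
        = (\<Sum>k<Suc K. \<gamma> k * (psiA (Suc k) x y * poly (G k) y))"
      by (simp add: \<gamma> sum_distrib_left sum_distrib_right algebra_simps)
  qed
qed

lemma bubble_times_chi_in_span:
  assumes c: "c \<in> set (chi_list p)" and "p \<ge> 2"
  shows "(\<lambda>x y. bubble x y * c x y) \<in> fun_span (psi_list p)"
proof -
  let ?span = "\<lambda>f K g. (\<lambda>x y. bubble x y * poly f x * ((1 - y) / 2) ^ K * poly g y)"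
  have span: "?span f K g \<in> fun_span (psi_list p)"
    if "degree f \<le> K" "K + degree g \<le> p - 2" for f K g
    using bubble_times_poly_in_span[OF that \<open>p \<ge> 2\<close>] .
  from c consider "c = (\<lambda>x y. 1 / 2)"
    | m where "m \<in> {1..<p - 1}" "c = chiB m"
    | m where "m \<in> {1..<p - 1}" "c = chiC m"
    | m n where "m + n + 4 \<le> p" "c = chiI m n"
    by (auto simp: chi_list_def set_index_pairs)
  then show ?thesis
  proof cases
    case 1
    have "(\<lambda>x y. 1 / 2 * ?span 1 0 1 x y) \<in> fun_span (psi_list p)"
      by (intro fun_span_scale span) simp_all
    then show ?thesis by (rule fun_span_cong) (simp add: 1)
  next
    case (2 m)
    have "(\<lambda>x y. 1 / 2 * ?span [:1/2, 1/2:] 1 (jacobi_poly (m - 1) 2 2) x y) \<in> fun_span (psi_list p)"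
      using 2 by (intro fun_span_scale span) auto
    then show ?thesis by (rule fun_span_cong) (simp add: 2 chiB_def field_simps)
  next
    case (3 m)
    have "(\<lambda>x y. (-1) ^ (m - 1) / 2 * ?span [:1/2, -1/2:] 1 (jacobi_poly (m - 1) 2 2) x y)
        \<in> fun_span (psi_list p)"
      using 3 by (intro fun_span_scale span) auto
    then show ?thesis by (rule fun_span_cong) (simp add: 3 chiC_def field_simps)
  next
    case (4 m n)
    define f where "f = [:1/2, 1/2:] * [:1/2, -1/2:] * jacobi_poly m 2 2"
    have "degree f \<le> m + 2"
      unfolding f_def by (rule order.trans[OF degree_mult_le]) (simp add: degree_mult_eq)
    then have "(\<lambda>x y. 1 / 2 * ?span f (m + 2) (jacobi_poly n (2 * m + 5) 2) x y) \<in> fun_span (psi_list p)"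
      using 4 by (intro fun_span_scale span) auto
    then show ?thesis by (rule fun_span_cong) (simp add: 4 chiI_def f_def bubble_def field_simps)
  qed
qed

section \<open>Linear independence of the test functions\<close>

lemma chiI_independent:
  assumes sum0: "\<And>x y. (\<Sum>m<M. \<Sum>n<M. d m n * chiI m n x y) = 0" and "m < M" "n < M"
  shows "d m n = 0"
proof -
  define D where "D m y = (\<Sum>n<M. d m n * jacobiP n (2 * m + 5) 2 y)" for m y
  have factor: "(\<Sum>m<M. \<Sum>n<M. d m n * chiI m n x y)
      = (1 - x) / 2 * ((1 + x) / 2) / 2 * (\<Sum>m<M. ((1 - y) / 2) ^ (m + 2) * D m y * jacobiP m 2 2 x)"
    for x y by (simp add: D_def chiI_def sum_distrib_left sum_distrib_right ac_simps)
  have outer: "(\<Sum>m<M. ((1 - y) / 2) ^ (m + 2) * D m y * jacobiP m 2 2 x) = 0" if "x \<notin> {-1, 1}" for x y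
  proof -
    have "(1 - x) / 2 * ((1 + x) / 2) / 2 \<noteq> 0"
      using that by auto
    moreover have "(1 - x) / 2 * ((1 + x) / 2) / 2 * (\<Sum>m<M. ((1 - y) / 2) ^ (m + 2) * D m y * jacobiP m 2 2 x) = 0"
      by (metis factor sum0)
    ultimately show ?thesis by simp
  qed
  have scaled: "((1 - y) / 2) ^ (m + 2) * D m y = 0" for y
    by (rule jacobiP_independent[of "{-1, 1}"]) (use outer \<open>m < M\<close> in auto)
  have inner: "D m y = 0" if "y \<notin> {1}" for y
    using scaled[of y] that by simp
  show "d m n = 0"
    by (rule jacobiP_independent[of "{1}"]) (use inner \<open>n < M\<close> in \<open>auto simp: D_def\<close>)
qed

lemma chi_combination_independent:
  fixes a :: real and b c :: "nat \<Rightarrow> real" and d :: "nat \<Rightarrow> nat \<Rightarrow> real"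
  assumes sum0: "\<And>x y. a / 2 + (\<Sum>j<N. b j * chiB (Suc j) x y) + (\<Sum>j<N. c j * chiC (Suc j) x y)
      + (\<Sum>m<M. \<Sum>n<M. d m n * chiI m n x y) = 0"
  shows "a = 0" and "j < N \<Longrightarrow> b j = 0" and "j < N \<Longrightarrow> c j = 0"
    and "m < M \<Longrightarrow> n < M \<Longrightarrow> d m n = 0"
proof -
  txt \<open>On the edge \<open>xi = -1\<close> only the vertex and the C-edge terms survive, on \<open>xi = 1\<close> only the
    B-edge terms.\<close>
  have left: "a / 2 + (1 - y) / 4 * (\<Sum>j<N. (-1) ^ j * c j * jacobiP j 2 2 y) = 0" for y
  proof -
    have "(\<Sum>j<N. c j * chiC (Suc j) (-1) y) = (1 - y) / 4 * (\<Sum>j<N. (-1) ^ j * c j * jacobiP j 2 2 y)"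
      unfolding sum_distrib_left by (rule sum.cong) (auto simp: chiC_def field_simps)
    then show ?thesis
      using sum0[of "-1" y] by (simp add: chiB_def chiI_def)
  qed
  from left[of 1] show a0: "a = 0" by simp
  have c0: "c j = 0" if "j < N" for j
  proof -
    have "(-1) ^ j * c j = 0"
      by (rule jacobiP_independent[of "{1}"]) (use left a0 \<open>j < N\<close> in auto)
    then show ?thesis by simp
  qed
  have right: "(1 - y) / 4 * (\<Sum>j<N. b j * jacobiP j 2 2 y) = 0" for y
  proof -
    have "(\<Sum>j<N. b j * chiB (Suc j) 1 y) = (1 - y) / 4 * (\<Sum>j<N. b j * jacobiP j 2 2 y)"
      unfolding sum_distrib_left by (rule sum.cong) (auto simp: chiB_def field_simps)
    then show ?thesis
      using sum0[of 1 y] a0 by (simp add: chiC_def chiI_def)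
  qed
  have b0: "b j = 0" if "j < N" for j
    by (rule jacobiP_independent[of "{1}"]) (use right \<open>j < N\<close> in auto)
  show "j < N \<Longrightarrow> b j = 0" "j < N \<Longrightarrow> c j = 0"
    by (simp_all add: b0 c0)
  show "d m n = 0" if "m < M" "n < M"
  proof (rule chiI_independent[OF _ that])
    fix x y
    show "(\<Sum>m<M. \<Sum>n<M. d m n * chiI m n x y) = 0"
      using sum0[of x y] a0 b0 c0 by simp
  qed
qed

lemma sum_nth_append:
  "(\<Sum>i<length (xs @ ys). z i * ((xs @ ys) ! i) x y)
    = (\<Sum>i<length xs. z i * (xs ! i) x y) + (\<Sum>i<length ys. z (length xs + i) * (ys ! i) x y)"
  by (induction xs arbitrary: z) (simp_all add: sum.lessThan_Suc_shift add.assoc del: sum.lessThan_Suc)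

lemma sum_chi_list:
  "(\<Sum>i<length (chi_list p). z i * (chi_list p ! i) x y)
    = z 0 / 2 + (\<Sum>j<p - 2. z (Suc j) * chiB (Suc j) x y)
      + (\<Sum>j<p - 2. z (Suc (p - 2 + j)) * chiC (Suc j) x y)
      + (\<Sum>j<length (index_pairs 4 p). z (Suc (2 * (p - 2) + j))
          * chiI (fst (index_pairs 4 p ! j)) (snd (index_pairs 4 p ! j)) x y)"
  unfolding chi_list_def length_Cons sum.lessThan_Suc_shift nth_Cons_0 nth_Cons_Suc sum_nth_append
  by (simp add: case_prod_beta' mult_2 add.assoc numeral_2_eq_2)

lemma sum_nth_group:
  fixes w :: "nat \<Rightarrow> real" and qs :: "(nat \<times> nat) list"
  assumes "set qs \<subseteq> {..<M} \<times> {..<M}"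
  shows "(\<Sum>j<length qs. w j * h (fst (qs ! j)) (snd (qs ! j)))
    = (\<Sum>m<M. \<Sum>n<M. sum w {j \<in> {..<length qs}. qs ! j = (m, n)} * h m n)"
proof -
  have "(\<Sum>j<length qs. w j * h (fst (qs ! j)) (snd (qs ! j)))
      = (\<Sum>q\<in>{..<M} \<times> {..<M}. sum (\<lambda>j. w j * h (fst (qs ! j)) (snd (qs ! j))) {j \<in> {..<length qs}. qs ! j = q})"
    by (intro sum.group[symmetric]) (use assms nth_mem in fastforce)+
  also have "\<dots> = (\<Sum>q\<in>{..<M} \<times> {..<M}. sum w {j \<in> {..<length qs}. qs ! j = q} * h (fst q) (snd q))"
    by (intro sum.cong refl) (auto simp: sum_distrib_right)
  finally show ?thesis
    by (simp add: sum.cartesian_product case_prod_beta')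
qed

lemma chi_list_independent:
  assumes sum0: "\<And>x y. (\<Sum>i<length (chi_list p). z i * (chi_list p ! i) x y) = 0"
    and i: "i < length (chi_list p)"
  shows "z i = 0"
proof -
  define N where "N = p - 2"
  define qs where "qs = index_pairs 4 p"
  txt \<open>\<open>d m n\<close> sums the coefficients at all positions carrying \<open>(m, n)\<close>; as \<open>qs\<close> is distinct
    there is only one.\<close>
  define d where "d m n = sum (\<lambda>j. z (Suc (2 * N + j))) {j \<in> {..<length qs}. qs ! j = (m, n)}" for m n
  have qs_sub: "set qs \<subseteq> {..<p} \<times> {..<p}"
    by (auto simp: qs_def set_index_pairs)
  have interior: "(\<Sum>j<length qs. z (Suc (2 * N + j)) * chiI (fst (qs ! j)) (snd (qs ! j)) x y)
      = (\<Sum>m<p. \<Sum>n<p. d m n * chiI m n x y)" for x y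
    unfolding d_def by (rule sum_nth_group[OF qs_sub])
  have "z 0 / 2 + (\<Sum>j<N. z (Suc j) * chiB (Suc j) x y)
      + (\<Sum>j<N. z (Suc (N + j)) * chiC (Suc j) x y) + (\<Sum>m<p. \<Sum>n<p. d m n * chiI m n x y) = 0" for x y
    using sum0[of x y] unfolding sum_chi_list N_def[symmetric] qs_def[symmetric] interior .
  note independent = chi_combination_independent[OF this]
  have d_nth: "d (fst (qs ! j)) (snd (qs ! j)) = z (Suc (2 * N + j))" if "j < length qs" for j
  proof -
    have "{j' \<in> {..<length qs}. qs ! j' = qs ! j} = {j}"
      using that distinct_index_pairs nth_eq_iff_index_eq unfolding qs_def by blast
    then show ?thesis by (simp add: d_def)
  qed
  have "length (chi_list p) = Suc (2 * N + length qs)"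
    by (simp add: chi_list_def N_def qs_def)
  then have "i = 0 \<or> (\<exists>j<N. i = Suc j) \<or> (\<exists>j<N. i = Suc (N + j))
      \<or> (\<exists>j<length qs. i = Suc (2 * N + j))"
    using i by presburger
  then consider "i = 0" | j where "i = Suc j" "j < N" | j where "i = Suc (N + j)" "j < N"
    | j where "i = Suc (2 * N + j)" "j < length qs"
    by blast
  then show ?thesis
  proof cases
    case 4
    have "fst (qs ! j) < p" "snd (qs ! j) < p"
      using qs_sub nth_mem[OF 4(2)] by auto
    then show ?thesis
      using independent(4) d_nth[OF 4(2)] 4(1) by simp
  qed (use independent in simp_all)
qed

section \<open>Integrals in collapsed coordinates\<close>

definition warped_integral :: "(real \<Rightarrow> real \<Rightarrow> real) \<Rightarrow> real" where
  "warped_integral H = integral Omega_ref (\<lambda>(r, s). warp H r s)"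

lemma warp_in_square:
  assumes "(r, s) \<in> Omega_ref"
  shows "(xi r s, eta r s) \<in> cbox (-1, -1) (1, 1)"
proof (cases "s = 1")
  case True
  then have "r = -1" using assms by (auto simp: Omega_ref_def)
  then show ?thesis using True by (simp add: xi_def eta_def cbox_Pair_eq)
next
  case False
  have "-1 \<le> s" "s < 1" "0 \<le> 1 + r" "1 + r \<le> 1 - s"
    using assms False by (auto simp: Omega_ref_def)
  then have "0 \<le> (1 + r) / (1 - s)" "(1 + r) / (1 - s) \<le> 1"
    by (auto simp: divide_le_eq_1)
  moreover have "xi r s = -1 + 2 * ((1 + r) / (1 - s))"
    by (simp add: xi_def)
  ultimately have "-1 \<le> xi r s" "xi r s \<le> 1"
    by linarith+
  then show ?thesis
    using \<open>-1 \<le> s\<close> \<open>s < 1\<close> by (simp add: eta_def cbox_Pair_eq)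
qed

lemma compact_Omega_ref: "compact Omega_ref"
proof (rule compact_eq_bounded_closed[THEN iffD2], rule conjI)
  show "bounded Omega_ref"
    by (rule bounded_subset[OF bounded_cbox[of "(-1, -1)" "(1, 1)"]]) (auto simp: Omega_ref_def cbox_Pair_eq)
  have eq: "Omega_ref = {z. -1 \<le> fst z} \<inter> {z. -1 \<le> snd z} \<inter> {z. fst z + snd z \<le> (0::real)}"
    by (auto simp: Omega_ref_def)
  show "closed Omega_ref"
    unfolding eq by (intro closed_Int closed_Collect_le continuous_intros)
qed

lemma integrable_warp:
  assumes H: "continuous_on UNIV (\<lambda>z. H (fst z) (snd z))"
    and S: "S \<subseteq> Omega_ref" "S \<in> lmeasurable"
  shows "(\<lambda>(r, s). warp H r s) integrable_on S"
proof -
  have fst_snd [measurable]: "(fst::real \<times> real \<Rightarrow> real) \<in> borel_measurable borel"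
    "(snd::real \<times> real \<Rightarrow> real) \<in> borel_measurable borel"
    by (intro borel_measurable_continuous_onI continuous_intros)+
  have "(\<lambda>z::real \<times> real. xi (fst z) (snd z)) \<in> borel_measurable borel"
    unfolding xi_def by measurable
  then have "(\<lambda>z. H (xi (fst z) (snd z)) (snd z)) \<in> borel_measurable borel"
    by (rule borel_measurable_continuous_Pair[OF _ fst_snd(2) H])
  then have meas: "(\<lambda>(r, s). warp H r s) \<in> borel_measurable (lebesgue_on S)"
    by (intro measurable_restrict_space1 measurable_completion) (simp add: warp_def eta_def case_prod_beta')
  have "bounded ((\<lambda>z. H (fst z) (snd z)) ` cbox (-1, -1) (1, 1))"
    by (intro compact_imp_bounded compact_continuous_image continuous_on_subset[OF H]) auto
  then obtain M where M: "\<And>z. z \<in> cbox (-1, -1) (1, 1) \<Longrightarrow> \<bar>H (fst z) (snd z)\<bar> \<le> M"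
    by (auto simp: bounded_iff)
  have "\<bar>(\<lambda>(r, s). warp H r s) z\<bar> \<le> M" if "z \<in> S" for z
    using M[OF warp_in_square] that S(1) by (auto simp: warp_def split: prod.splits)
  then show ?thesis
    using measurable_bounded_by_integrable_imp_integrable_real[OF meas integrable_on_const[OF S(2)]]
      fmeasurableD[OF S(2)] by blast
qed

lemma warped_integral_sum:
  assumes "finite J" and H: "\<And>j. j \<in> J \<Longrightarrow> continuous_on UNIV (\<lambda>z. H j (fst z) (snd z))"
  shows "warped_integral (\<lambda>x y. \<Sum>j\<in>J. a j * H j x y) = (\<Sum>j\<in>J. a j * warped_integral (H j))"
proof -
  have "(\<lambda>z. a j * (\<lambda>(r, s). warp (H j) r s) z) integrable_on Omega_ref" if "j \<in> J" for j
    by (intro integrable_on_mult_right integrable_warp[OF H[OF that] order_refl]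
        lmeasurable_compact compact_Omega_ref)
  then have "integral Omega_ref (\<lambda>z. \<Sum>j\<in>J. a j * (\<lambda>(r, s). warp (H j) r s) z)
      = (\<Sum>j\<in>J. a j * warped_integral (H j))"
    by (simp add: integral_sum[OF \<open>finite J\<close>] warped_integral_def)
  then show ?thesis
    by (simp add: warped_integral_def warp_def case_prod_beta')
qed

lemma warped_integral_eq_0_imp_vanishes_on_square:
  assumes H: "continuous_on UNIV (\<lambda>z. H (fst z) (snd z))"
    and nonneg: "\<And>x y. -1 \<le> x \<Longrightarrow> x \<le> 1 \<Longrightarrow> -1 \<le> y \<Longrightarrow> y \<le> 1 \<Longrightarrow> 0 \<le> H x y"
    and zero: "warped_integral H = 0"
    and rs: "(r, s) \<in> cbox (-1, -1) (0, 0)"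
  shows "warp H r s = 0"
proof -
  define f where "f = (\<lambda>(r, s). warp H r s)"
  txt \<open>On the square \<open>B \<subseteq> Omega_ref\<close> the collapsed coordinates are continuous.\<close>
  define B :: "(real \<times> real) set" where "B = cbox (-1, -1) (0, 0)"
  have B_sub: "B \<subseteq> Omega_ref"
    by (auto simp: B_def Omega_ref_def cbox_Pair_eq)
  have f_nonneg: "0 \<le> f z" if "z \<in> Omega_ref" for z
    using warp_in_square[of "fst z" "snd z"] that nonneg by (auto simp: f_def warp_def cbox_Pair_eq case_prod_beta)
  have int_B: "f integrable_on B"
    unfolding f_def B_def by (rule integrable_warp[OF H B_sub[unfolded B_def]]) simp
  have "integral B f \<le> integral Omega_ref f"
    by (rule integral_subset_le[OF B_sub int_B])
      (use f_nonneg f_def integrable_warp[OF H order_refl lmeasurable_compact[OF compact_Omega_ref]] in auto)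
  moreover have "0 \<le> integral B f"
    by (rule integral_nonneg[OF int_B]) (use f_nonneg B_sub in auto)
  ultimately have "integral B f = 0"
    using zero by (simp add: warped_integral_def f_def)
  then have int0: "(f has_integral 0) B"
    using int_B by (metis has_integral_integral)
  have "continuous_on B (\<lambda>z. (xi (fst z) (snd z), eta (fst z) (snd z)))"
    unfolding B_def xi_def eta_def by (intro continuous_intros) (auto simp: cbox_Pair_eq)
  from continuous_on_compose2[OF H this] have cont: "continuous_on B f"
    by (simp add: f_def warp_def case_prod_beta')
  have "f (r, s) = 0"
  proof (rule has_integral_0_cbox_imp_0[OF cont[unfolded B_def] _ int0[unfolded B_def] _ rs])
    show "0 \<le> f z" if "z \<in> box (-1, -1) (0, 0)" for z
      using f_nonneg B_sub box_subset_cbox that unfolding B_def by blast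
    show "box (-1::real, -1::real) (0, 0) \<noteq> {}"
      by (auto simp: box_ne_empty Basis_prod_def)
  qed
  then show ?thesis
    by (simp add: f_def)
qed

lemma warped_integral_eq_0_imp_vanishes:
  assumes H: "continuous_on UNIV (\<lambda>z. H (fst z) (snd z))"
    and nonneg: "\<And>x y. -1 \<le> x \<Longrightarrow> x \<le> 1 \<Longrightarrow> -1 \<le> y \<Longrightarrow> y \<le> 1 \<Longrightarrow> 0 \<le> H x y"
    and zero: "warped_integral H = 0"
    and xy: "-1 < x" "x < 0" "-1 < y" "y < 0"
  shows "H x y = 0"
proof -
  define r where "r = -1 + (1 + x) * (1 - y) / 2"
  have "-1 < r" "r < 0"
    using xy mult_strict_mono[of "1 + x" 1 "1 - y" 2] by (auto simp: r_def)
  then have "warp H r y = 0"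
    using xy by (intro warped_integral_eq_0_imp_vanishes_on_square[OF H nonneg zero]) (auto simp: cbox_Pair_eq)
  moreover have "xi r y = x"
    using xy by (simp add: xi_def r_def field_simps)
  ultimately show ?thesis
    by (simp add: warp_def eta_def)
qed

section \<open>Non-singularity of the Gram matrix\<close>

lemma det_nonzero_if_quadratic_form_definite:
  fixes K :: "'a::field mat"
  assumes K: "K \<in> carrier_mat n n"
    and definite: "\<And>v. v \<in> carrier_vec n \<Longrightarrow> scalar_prod v (K *\<^sub>v v) = 0 \<Longrightarrow> v = 0\<^sub>v n"
  shows "det K \<noteq> 0"
proof
  assume "det K = 0"
  then obtain v where v: "v \<in> carrier_vec n" "v \<noteq> 0\<^sub>v n" "K *\<^sub>v v = 0\<^sub>v n"
    using det_0_iff_vec_prod_zero[OF K] by blast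
  then have "scalar_prod v (K *\<^sub>v v) = 0" by simp
  then show False using definite v by blast
qed

lemma gram_entry:
  assumes "i < length (chi_list p)" "j < length (psi_list p)"
  shows "gram p $$ (i, j) = warped_integral (\<lambda>x y. (1 + y) * (chi_list p ! i) x y * (psi_list p ! j) x y)"
  using assms by (simp add: gram_def Phi_mu0_eq_warp Phi_star_eq_warp warped_integral_def warp_def mult.assoc)

lemma chi_list_definite:
  assumes zero: "warped_integral (\<lambda>x y. (1 + y) * bubble x y * (\<Sum>k<length (chi_list p). v k * (chi_list p ! k) x y)\<^sup>2) = 0"
    and "k < length (chi_list p)"
  shows "v k = 0"
proof (rule chi_list_independent[OF _ \<open>k < length (chi_list p)\<close>])
  define F where "F x y = (\<Sum>k<length (chi_list p). v k * (chi_list p ! k) x y)" for x y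
  have F: "bivariate_polynomial F"
    unfolding F_def bivariate_polynomial_def
    by (intro real_polynomial_function_intros)
      (use bivariate_polynomial_chi_list[OF nth_mem] in \<open>auto simp: bivariate_polynomial_def\<close>)
  have "(1 + y) * bubble x y * (F x y)\<^sup>2 = 0" if "-1 < x" "x < 0" "-1 < y" "y < 0" for x y
  proof (rule warped_integral_eq_0_imp_vanishes[OF _ _ zero[folded F_def] that])
    show "continuous_on UNIV (\<lambda>z. (1 + snd z) * bubble (fst z) (snd z) * (F (fst z) (snd z))\<^sup>2)"
      unfolding bubble_def by (intro continuous_intros continuous_on_bivariate_polynomial[OF F]) auto
    show "0 \<le> (1 + y) * bubble x y * (F x y)\<^sup>2" if "-1 \<le> x" "x \<le> 1" "-1 \<le> y" "y \<le> 1" for x y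
      using that by (simp add: bubble_def)
  qed
  then have "F x y = 0" if "-1 < x" "x < 0" "-1 < y" "y < 0" for x y
    using that by (simp add: bubble_def)
  then have "F x y = 0" for x y
    using bivariate_polynomial_eq_0[OF F, of "-1" 0 "-1" 0] by auto
  then show "(\<Sum>k<length (chi_list p). v k * (chi_list p ! k) x y) = 0" for x y
    by (simp add: F_def)
qed

lemma warped_integral_double_sum:
  fixes N :: nat
  assumes "\<And>i k. i < N \<Longrightarrow> k < N \<Longrightarrow> continuous_on UNIV (\<lambda>z. H i k (fst z) (snd z))"
  shows "(\<Sum>i<N. v i * (\<Sum>k<N. v k * warped_integral (H i k)))
    = warped_integral (\<lambda>x y. \<Sum>i<N. v i * (\<Sum>k<N. v k * H i k x y))"
proof -
  have "(\<Sum>k<N. v k * warped_integral (H i k)) = warped_integral (\<lambda>x y. \<Sum>k<N. v k * H i k x y)"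
    if "i < N" for i
    by (rule warped_integral_sum[symmetric]) (simp_all add: assms that)
  moreover have "warped_integral (\<lambda>x y. \<Sum>i<N. v i * (\<Sum>k<N. v k * H i k x y))
      = (\<Sum>i<N. v i * warped_integral (\<lambda>x y. \<Sum>k<N. v k * H i k x y))"
    by (rule warped_integral_sum) (auto intro!: continuous_on_sum continuous_on_mult continuous_on_const assms)
  ultimately show ?thesis
    by simp
qed

lemma bubble_times_chi_expansion:
  assumes "p \<ge> 2"
  obtains D where "\<And>k x y. k < length (chi_list p) \<Longrightarrow>
    bubble x y * (chi_list p ! k) x y = (\<Sum>j<length (psi_list p). D k j * (psi_list p ! j) x y)"
proof -
  have "\<forall>k<length (chi_list p). \<exists>d. \<forall>x y.
      bubble x y * (chi_list p ! k) x y = (\<Sum>j<length (psi_list p). d j * (psi_list p ! j) x y)"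
    using bubble_times_chi_in_span[OF nth_mem assms] unfolding fun_span_def by auto
  then show thesis
    using that by metis
qed

lemma gram_mult_coefficients_entry:
  assumes D: "\<And>k x y. k < N \<Longrightarrow> bubble x y * (chi_list p ! k) x y = (\<Sum>j<N. D k j * (psi_list p ! j) x y)"
    and len: "length (chi_list p) = N" "length (psi_list p) = N" and "i < N" "k < N"
  shows "(gram p * transpose_mat (mat N N (\<lambda>(k, j). D k j))) $$ (i, k)
    = warped_integral (\<lambda>x y. (1 + y) * (chi_list p ! i) x y * (bubble x y * (chi_list p ! k) x y))"
proof -
  let ?c = "\<lambda>i. chi_list p ! i" and ?g = "\<lambda>j. psi_list p ! j"
  have "gram p \<in> carrier_mat N N"
    by (simp add: gram_def Phi_mu0_eq_warp Phi_star_eq_warp len)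
  then have "(gram p * transpose_mat (mat N N (\<lambda>(k, j). D k j))) $$ (i, k)
      = (\<Sum>j<N. D k j * warped_integral (\<lambda>x y. (1 + y) * ?c i x y * ?g j x y))"
    using assms by (simp add: scalar_prod_def gram_entry atLeast0LessThan mult.commute)
  also have "\<dots> = warped_integral (\<lambda>x y. \<Sum>j<N. D k j * ((1 + y) * ?c i x y * ?g j x y))"
    using assms by (intro warped_integral_sum[symmetric])
      (simp_all add: continuous_on_mult continuous_on_add continuous_on_snd continuous_on_chi_list
        continuous_on_psi_list)
  finally show ?thesis
    by (simp add: D[OF \<open>k < N\<close>] sum_distrib_left mult_ac)
qed

lemma det_gram_nonzero:
  assumes "p \<ge> 2"
  shows "det (gram p) \<noteq> 0"
proof -
  define N where "N = p * (p - 1) div 2"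
  let ?c = "\<lambda>i. chi_list p ! i"
  have len: "length (chi_list p) = N" "length (psi_list p) = N"
    using length_chi_list[OF assms] length_psi_list[OF assms] by (simp_all add: N_def)
  have gram: "gram p \<in> carrier_mat N N"
    by (simp add: gram_def Phi_mu0_eq_warp Phi_star_eq_warp len)
  obtain D where D: "\<And>k x y. k < N \<Longrightarrow> bubble x y * ?c k x y = (\<Sum>j<N. D k j * (psi_list p ! j) x y)"
    using bubble_times_chi_expansion[OF assms] len by metis
  define K where "K = gram p * transpose_mat (mat N N (\<lambda>(k, j). D k j))"
  have K: "K \<in> carrier_mat N N"
    using gram by (simp add: K_def)
  have cont: "continuous_on UNIV
      (\<lambda>z. (1 + snd z) * ?c i (fst z) (snd z) * (bubble (fst z) (snd z) * ?c k (fst z) (snd z)))"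
    if "i < N" "k < N" for i k
    using that len unfolding bubble_def by (intro continuous_intros continuous_on_chi_list) auto
  have "det K \<noteq> 0"
  proof (rule det_nonzero_if_quadratic_form_definite[OF K])
    fix v :: "real vec"
    assume v: "v \<in> carrier_vec N" and "scalar_prod v (K *\<^sub>v v) = 0"
    have "scalar_prod v (K *\<^sub>v v) = (\<Sum>i<N. v $ i * (\<Sum>k<N. v $ k * K $$ (i, k)))"
      using K v by (simp add: scalar_prod_def atLeast0LessThan mult_ac)
    also have "\<dots> = warped_integral
        (\<lambda>x y. \<Sum>i<N. v $ i * (\<Sum>k<N. v $ k * ((1 + y) * ?c i x y * (bubble x y * ?c k x y))))"
      by (simp add: K_def gram_mult_coefficients_entry[OF D len] warped_integral_double_sum cont)
    also have "\<dots> = warped_integral (\<lambda>x y. (1 + y) * bubble x y * (\<Sum>k<N. v $ k * ?c k x y)\<^sup>2)"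
      by (simp add: power2_eq_square sum_distrib_left sum_distrib_right mult_ac)
    finally have "v $ k = 0" if "k < N" for k
      using chi_list_definite[where v = "\<lambda>k. v $ k" and p = p] that len \<open>scalar_prod v (K *\<^sub>v v) = 0\<close>
      by simp
    then show "v = 0\<^sub>v N"
      using v by (intro eq_vecI) auto
  qed
  then show ?thesis
    using det_mult[OF gram, of "transpose_mat (mat N N (\<lambda>(k, j). D k j))"] by (simp add: K_def)
qed

theorem theorem3p1:
  fixes p :: nat
  assumes "p \<ge> 2"
  shows "length (Phi_mu0 p) = p * (p - 1) div 2
       \<and> length (Phi_star p) = p * (p - 1) div 2
       \<and> Determinant.det (gram p) \<noteq> 0
       \<and> (\<forall>x \<in> carrier_vec (p * (p - 1) div 2).
            gram p *\<^sub>v x = 0\<^sub>v (p * (p - 1) div 2) \<longrightarrow> x = 0\<^sub>v (p * (p - 1) div 2))"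
proof -
  define N where "N = p * (p - 1) div 2"
  have "length (Phi_mu0 p) = N" "length (Phi_star p) = N"
    using length_chi_list[OF assms] length_psi_list[OF assms]
    by (simp_all add: N_def Phi_mu0_eq_warp Phi_star_eq_warp)
  moreover have "gram p \<in> carrier_mat N N"
    using calculation by (simp add: gram_def)
  moreover have "det (gram p) \<noteq> 0"
    by (rule det_gram_nonzero[OF assms])
  ultimately show ?thesis
    using det_0_iff_vec_prod_zero unfolding N_def by blast
qed

end
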